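(* Let $A_n=1$ if $n=2^{k+1}-2$ for some integer $k\ge 0$ and $A_n=0$ otherwise, and let $D(n)=\det\left(A_{i+j}\right)_{i,j=0}^{n-1}$ for $n\ge 1$, $D(0)=1$. For $n\ge 0$ with binary expansion $n=[\varepsilon_k\cdots\varepsilon_1\varepsilon_0]_2$ (digits $\varepsilon_i\in\{0,1\}$, with $\varepsilon_i=0$ for $i>k$), let $\delta(n)$ be the number of indices $i\ge 1$ with $\varepsilon_{i+1}\varepsilon_i=10$ (i.e. $\varepsilon_{i+1}=1,\varepsilon_i=0$), plus $1$ if $\varepsilon_1\varepsilon_0=11$ (i.e. $\varepsilon_1=\varepsilon_0=1$). Then for all $n\ge 0$, $$D(n)=(-1)^{\delta(n)}.$$
   Context: Equivalently $A_n=a_{n+1}$ where $a_m=1$ if $m+1$ is a power of $2$ and $a_m=0$ otherwise. For example $\delta(3)=1$, $\delta(4)=1$, $\delta(6)=0$, $\delta(15)=1$. *)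

theory Defs
  imports "Jordan_Normal_Form.Determinant"
begin

definition seqA :: "nat \<Rightarrow> int" where
  "seqA n = (if \<exists>k::nat. n = 2 ^ (k + 1) - 2 then 1 else 0)"

text \<open>Hankel determinant D(n) = det (A (i+j)) for i,j = 0..n-1; the 0x0 determinant is 1.\<close>
definition hankelD :: "nat \<Rightarrow> int" where
  "hankelD n = det (mat n n (\<lambda>(i, j). seqA (i + j)))"

definition digit :: "nat \<Rightarrow> nat \<Rightarrow> nat" where
  "digit n i = (n div 2 ^ i) mod 2"

definition delta :: "nat \<Rightarrow> nat" where
  "delta n = card {i. 1 \<le> i \<and> digit n (i + 1) = 1 \<and> digit n i = 0}
             + (if digit n 1 = 1 \<and> digit n 0 = 1 then 1 else 0)"

end

theory Submission
  imports Defs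
begin

text \<open>
  Conjugating a Hankel matrix by the permutation that lists the even indices first sorts its
  entries by the parities of the indices.  As \<open>A\<close> vanishes at odd indices this gives
  \<open>D(2m+b) = E(m+b) D(m)\<close>, where \<open>E\<close> is the Hankel determinant of the indicator \<open>a\<close> of the
  numbers \<open>2^k - 1\<close> (so \<open>A_n = a_(n+1)\<close>).  Expanding \<open>E\<close> along the first row separates
  \<open>a_0 = 1\<close> from sequences vanishing at even indices, whose Hankel determinants are
  \<open>(-1)^q\<close> times a square in size \<open>2q\<close> and \<open>0\<close> in odd size; hence
  \<open>E(2q) = (-1)^q E(q)^2\<close> and \<open>E(2q+1) = (-1)^q D(q)^2\<close>.  By a joint induction all these
  determinants are signs, \<open>E(n) = (-1)^(n div 2)\<close>, and \<open>D(2m+b) = (-1)^((m+b) div 2) D(m)\<close>,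
  which is the recursion of \<open>\<delta>\<close> under deleting the last binary digit.
\<close>

lemma det_permute_rows_cols:
  fixes A :: "'a :: comm_ring_1 mat"
  assumes A: "A \<in> carrier_mat n n" and p: "p permutes {0..<n}"
  shows "det (mat n n (\<lambda>(i, j). A $$ (p i, p j))) = det A"
proof -
  let ?B = "mat n n (\<lambda>(i, j). A $$ (p i, j))"
  let ?C = "mat n n (\<lambda>(i, j). A $$ (p i, p j))"
  have "?C\<^sup>T = mat n n (\<lambda>(i, j). ?B\<^sup>T $$ (p i, j))"
    using p by (intro eq_matI) (auto simp: permutes_in_image)
  then have "det ?C = signof p * det ?B"
    using det_permute_rows[of "?B\<^sup>T" n p] p det_transpose[of ?B n] det_transpose[of ?C n] by simp
  also have "\<dots> = signof p * signof p * det A"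
    using det_permute_rows[OF A p] by simp
  finally show ?thesis by (simp add: sign_def)
qed

lemma det_lower_left_zero_block:
  fixes A :: "'a :: idom mat"
  assumes A: "A \<in> carrier_mat n n" and k: "k \<le> n"
    and zero: "\<And>i j. k \<le> i \<Longrightarrow> i < n \<Longrightarrow> j < k \<Longrightarrow> A $$ (i, j) = 0"
  shows "det A = det (mat k k (\<lambda>(i, j). A $$ (i, j)))
                 * det (mat (n - k) (n - k) (\<lambda>(i, j). A $$ (i + k, j + k)))"
proof -
  have "A = four_block_mat (mat k k (\<lambda>(i, j). A $$ (i, j)))
              (mat k (n - k) (\<lambda>(i, j). A $$ (i, j + k))) (0\<^sub>m (n - k) k)
              (mat (n - k) (n - k) (\<lambda>(i, j). A $$ (i + k, j + k)))"
    using A k zero by (intro eq_matI) (auto simp: four_block_mat_def)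
  then show ?thesis
    by (metis det_four_block_mat_lower_left_zero mat_carrier)
qed

lemma det_upper_left_zero_block:
  fixes A :: "'a :: idom mat"
  assumes A: "A \<in> carrier_mat (k + l) (k + l)"
    and zero: "\<And>i j. i < l \<Longrightarrow> j < k \<Longrightarrow> A $$ (i, j) = 0"
  shows "det A = (-1) ^ (k * l) * det (mat k k (\<lambda>(i, j). A $$ (i + l, j)))
                 * det (mat l l (\<lambda>(i, j). A $$ (i, j + k)))"
proof -
  let ?M = "mat (k + l) (k + l) (\<lambda>(i, j). A $$ (if i < k then i + l else i - k, j))"
  have "det A = (-1) ^ (k * l) * det ?M"
    by (rule det_swap_rows[OF A])
  also have "det ?M = det (mat k k (\<lambda>(i, j). ?M $$ (i, j)))
                 * det (mat (k + l - k) (k + l - k) (\<lambda>(i, j). ?M $$ (i + k, j + k)))"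
    by (rule det_lower_left_zero_block) (auto simp: zero)
  also have "mat k k (\<lambda>(i, j). ?M $$ (i, j)) = mat k k (\<lambda>(i, j). A $$ (i + l, j))"
    by (intro eq_matI) auto
  also have "mat (k + l - k) (k + l - k) (\<lambda>(i, j). ?M $$ (i + k, j + k))
             = mat l l (\<lambda>(i, j). A $$ (i, j + k))"
    by (intro eq_matI) auto
  finally show ?thesis by simp
qed

lemma det_zero_column:
  fixes A :: "'a :: comm_ring_1 mat"
  assumes A: "A \<in> carrier_mat n n" and j: "j < n" and zero: "\<And>i. i < n \<Longrightarrow> A $$ (i, j) = 0"
  shows "det A = 0"
  using laplace_expansion_column[OF A j] zero by simp

definition hankel_mat :: "nat \<Rightarrow> (nat \<Rightarrow> 'a) \<Rightarrow> 'a mat" where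
  "hankel_mat n s = mat n n (\<lambda>(i, j). s (i + j))"

lemma hankel_mat_carrier [simp]: "hankel_mat n s \<in> carrier_mat n n"
  by (simp add: hankel_mat_def)

definition evens_first :: "nat \<Rightarrow> nat \<Rightarrow> nat" where
  "evens_first n i =
    (if i < (n + 1) div 2 then 2 * i else if i < n then 2 * (i - (n + 1) div 2) + 1 else i)"

lemma evens_first_low: "i < (n + 1) div 2 \<Longrightarrow> evens_first n i = 2 * i"
  by (simp add: evens_first_def)

lemma evens_first_high: "(n + 1) div 2 \<le> i \<Longrightarrow> i < n \<Longrightarrow> evens_first n i = 2 * (i - (n + 1) div 2) + 1"
  by (simp add: evens_first_def)

lemma evens_first_permutes: "evens_first n permutes {0..<n}"
proof (rule bij_imp_permutes)
  have inj: "inj_on (evens_first n) {0..<n}"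
    by (rule inj_onI) (auto simp: evens_first_def split: if_splits, presburger+)
  have "evens_first n ` {0..<n} \<subseteq> {0..<n}"
    by (auto simp: evens_first_def)
  with inj have "evens_first n ` {0..<n} = {0..<n}"
    by (simp add: endo_inj_surj)
  with inj show "bij_betw (evens_first n) {0..<n} {0..<n}"
    by (simp add: bij_betw_def)
qed (simp add: evens_first_def)

lemma det_hankel_mat_evens_first:
  fixes s :: "nat \<Rightarrow> 'a :: comm_ring_1"
  shows "det (hankel_mat n s) = det (mat n n (\<lambda>(i, j). s (evens_first n i + evens_first n j)))"
proof -
  have "mat n n (\<lambda>(i, j). s (evens_first n i + evens_first n j))
        = mat n n (\<lambda>(i, j). hankel_mat n s $$ (evens_first n i, evens_first n j))"
    using evens_first_permutes[of n] by (intro eq_matI) (auto simp: hankel_mat_def permutes_in_image)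
  then show ?thesis
    using det_permute_rows_cols[OF hankel_mat_carrier evens_first_permutes] by metis
qed

lemma det_hankel_mat_odd_zero:
  fixes s :: "nat \<Rightarrow> 'a :: idom"
  assumes odd_zero: "\<And>m. s (2 * m + 1) = 0"
  shows "det (hankel_mat n s)
         = det (hankel_mat ((n + 1) div 2) (\<lambda>m. s (2 * m))) * det (hankel_mat (n div 2) (\<lambda>m. s (2 * m + 2)))"
proof -
  let ?h = "(n + 1) div 2"
  let ?P = "mat n n (\<lambda>(i, j). s (evens_first n i + evens_first n j))"
  have "det ?P = det (mat ?h ?h (\<lambda>(i, j). ?P $$ (i, j)))
                 * det (mat (n - ?h) (n - ?h) (\<lambda>(i, j). ?P $$ (i + ?h, j + ?h)))"
  proof (rule det_lower_left_zero_block)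
    fix i j assume "?h \<le> i" "i < n" "j < ?h"
    then have "evens_first n i + evens_first n j = 2 * (i - ?h + j) + 1"
      by (simp add: evens_first_low evens_first_high)
    with \<open>i < n\<close> \<open>j < ?h\<close> show "?P $$ (i, j) = 0" using odd_zero[of "i - ?h + j"] by simp
  qed auto
  moreover have "mat ?h ?h (\<lambda>(i, j). ?P $$ (i, j)) = hankel_mat ?h (\<lambda>m. s (2 * m))"
    by (intro eq_matI) (auto simp: hankel_mat_def evens_first_low algebra_simps)
  moreover have "mat (n - ?h) (n - ?h) (\<lambda>(i, j). ?P $$ (i + ?h, j + ?h))
                 = hankel_mat (n div 2) (\<lambda>m. s (2 * m + 2))"
    by (intro eq_matI) (auto simp: hankel_mat_def evens_first_high algebra_simps)
  ultimately show ?thesis by (simp add: det_hankel_mat_evens_first)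
qed

lemma det_hankel_mat_even_zero_even_size:
  fixes s :: "nat \<Rightarrow> 'a :: idom"
  assumes even_zero: "\<And>m. s (2 * m) = 0"
  shows "det (hankel_mat (2 * q) s) = (-1) ^ q * det (hankel_mat q (\<lambda>m. s (2 * m + 1))) ^ 2"
proof -
  let ?P = "mat (2 * q) (2 * q) (\<lambda>(i, j). s (evens_first (2 * q) i + evens_first (2 * q) j))"
  have "det ?P = (-1) ^ (q * q) * det (mat q q (\<lambda>(i, j). ?P $$ (i + q, j)))
                 * det (mat q q (\<lambda>(i, j). ?P $$ (i, j + q)))"
  proof (rule det_upper_left_zero_block)
    show "?P \<in> carrier_mat (q + q) (q + q)" by (simp add: mult_2)
    fix i j assume "i < q" "j < q"
    then show "?P $$ (i, j) = 0" using even_zero[of "i + j"] by (simp add: evens_first_low)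
  qed
  moreover have "mat q q (\<lambda>(i, j). ?P $$ (i + q, j)) = hankel_mat q (\<lambda>m. s (2 * m + 1))"
    by (intro eq_matI) (auto simp: hankel_mat_def evens_first_low evens_first_high algebra_simps)
  moreover have "mat q q (\<lambda>(i, j). ?P $$ (i, j + q)) = hankel_mat q (\<lambda>m. s (2 * m + 1))"
    by (intro eq_matI) (auto simp: hankel_mat_def evens_first_low evens_first_high algebra_simps)
  moreover have "(-1 :: 'a) ^ (q * q) = (-1) ^ q"
    by (simp add: minus_one_power_iff)
  ultimately show ?thesis by (simp add: det_hankel_mat_evens_first power2_eq_square)
qed

lemma det_hankel_mat_even_zero_odd_size:
  fixes s :: "nat \<Rightarrow> 'a :: idom"
  assumes even_zero: "\<And>m. s (2 * m) = 0"
  shows "det (hankel_mat (2 * q + 1) s) = 0"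
proof -
  let ?n = "2 * q + 1"
  let ?P = "mat ?n ?n (\<lambda>(i, j). s (evens_first ?n i + evens_first ?n j))"
  have "det ?P = (-1) ^ (q * (q + 1)) * det (mat q q (\<lambda>(i, j). ?P $$ (i + (q + 1), j)))
                 * det (mat (q + 1) (q + 1) (\<lambda>(i, j). ?P $$ (i, j + q)))"
  proof (rule det_upper_left_zero_block)
    show "?P \<in> carrier_mat (q + (q + 1)) (q + (q + 1))" by (simp add: mult_2)
    fix i j assume "i < q + 1" "j < q"
    then show "?P $$ (i, j) = 0" using even_zero[of "i + j"] by (simp add: evens_first_low)
  qed
  moreover have "det (mat (q + 1) (q + 1) (\<lambda>(i, j). ?P $$ (i, j + q))) = 0"
  proof (rule det_zero_column[where j = 0])
    fix i assume "i < q + 1"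
    then show "mat (q + 1) (q + 1) (\<lambda>(i, j). ?P $$ (i, j + q)) $$ (i, 0) = 0"
      using even_zero[of "i + q"] by (simp add: evens_first_low distrib_left)
  qed auto
  ultimately show ?thesis by (simp add: det_hankel_mat_evens_first)
qed

lemma det_hankel_mat_split_corner:
  fixes s :: "nat \<Rightarrow> 'a :: comm_ring_1"
  assumes n: "0 < n"
  shows "det (hankel_mat n s) = det (hankel_mat n (s(0 := 0))) + s 0 * det (hankel_mat (n - 1) (\<lambda>m. s (m + 2)))"
proof -
  let ?A = "hankel_mat n s" and ?B = "hankel_mat n (s(0 := 0))"
  have A: "?A \<in> carrier_mat n n" and B: "?B \<in> carrier_mat n n" by simp_all
  have same_minor: "mat_delete ?A 0 j = mat_delete ?B 0 j" for j
    by (intro eq_matI) (auto simp: mat_delete_def hankel_mat_def)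
  have first_row: "?A $$ (0, j) = ?B $$ (0, j) + (if j = 0 then s 0 else 0)" if "j < n" for j
    using that n by (auto simp: hankel_mat_def)
  have "det ?A = (\<Sum>j<n. ?A $$ (0, j) * cofactor ?A 0 j)"
    by (rule laplace_expansion_row[OF A n])
  also have "\<dots> = (\<Sum>j<n. ?B $$ (0, j) * cofactor ?B 0 j + (if j = 0 then s 0 * cofactor ?A 0 0 else 0))"
    by (rule sum.cong) (auto simp: first_row cofactor_def same_minor distrib_right)
  also have "\<dots> = det ?B + s 0 * cofactor ?A 0 0"
    using n by (simp add: sum.distrib laplace_expansion_row[OF B n])
  moreover have "mat_delete ?A 0 0 = hankel_mat (n - 1) (\<lambda>m. s (m + 2))"
    by (intro eq_matI) (auto simp: mat_delete_def hankel_mat_def)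
  ultimately show ?thesis by (simp add: cofactor_def)
qed

definition seqa :: "nat \<Rightarrow> int" where
  "seqa m = (if \<exists>k. Suc m = 2 ^ k then 1 else 0)"

lemma seqa_0 [simp]: "seqa 0 = 1"
proof -
  have "\<exists>k. Suc 0 = 2 ^ k" by (rule exI[of _ 0]) simp
  then show ?thesis by (simp add: seqa_def)
qed

lemma seqa_double_plus_one: "seqa (2 * m + 1) = seqa m"
proof -
  have "(\<exists>k. Suc (2 * m + 1) = 2 ^ k) \<longleftrightarrow> (\<exists>k. Suc m = 2 ^ k)"
  proof
    assume "\<exists>k. Suc (2 * m + 1) = 2 ^ k"
    then obtain k where k: "2 * Suc m = 2 ^ k" by auto
    then obtain j where "k = Suc j" by (cases k) auto
    with k have "Suc m = 2 ^ j" by simp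
    then show "\<exists>k. Suc m = 2 ^ k" ..
  next
    assume "\<exists>k. Suc m = 2 ^ k"
    then obtain k where "Suc m = 2 ^ k" ..
    then have "Suc (2 * m + 1) = 2 ^ Suc k" by simp
    then show "\<exists>k. Suc (2 * m + 1) = 2 ^ k" ..
  qed
  then show ?thesis by (simp add: seqa_def)
qed

lemma seqa_double: "seqa (2 * m) = (if m = 0 then 1 else 0)"
proof -
  have "Suc (2 * m) = 2 ^ k \<longleftrightarrow> m = 0 \<and> k = 0" for k
  proof
    assume eq: "Suc (2 * m) = 2 ^ k"
    have "odd (Suc (2 * m))" by simp
    with eq have "k = 0" by simp
    with eq show "m = 0 \<and> k = 0" by simp
  qed simp
  then show ?thesis by (simp add: seqa_def)
qed

lemma seqA_eq_seqa: "seqA m = seqa (m + 1)"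
proof -
  have "(\<exists>k. m = 2 ^ (k + 1) - 2) \<longleftrightarrow> (\<exists>k. Suc (m + 1) = 2 ^ k)"
  proof
    assume "\<exists>k. Suc (m + 1) = 2 ^ k"
    then obtain k where k: "m + 2 = 2 ^ k" by auto
    then obtain j where "k = Suc j" by (cases k) auto
    with k have "m = 2 ^ (j + 1) - 2" by simp
    then show "\<exists>k. m = 2 ^ (k + 1) - 2" ..
  next
    assume "\<exists>k. m = 2 ^ (k + 1) - 2"
    then obtain k where m: "m = 2 ^ (k + 1) - 2" ..
    have "(2 :: nat) \<le> 2 ^ (k + 1)" by simp
    with m have "Suc (m + 1) = 2 ^ (k + 1)" by linarith
    then show "\<exists>k. Suc (m + 1) = 2 ^ k" ..
  qed
  then show ?thesis by (simp add: seqA_def seqa_def)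
qed

definition hankelE :: "nat \<Rightarrow> int" where
  "hankelE n = det (hankel_mat n seqa)"

lemma hankelD_eq_det_hankel_mat: "hankelD n = det (hankel_mat n seqA)"
  unfolding hankelD_def hankel_mat_def ..

lemma hankelD_double_add:
  assumes b: "b < 2"
  shows "hankelD (2 * m + b) = hankelE (m + b) * hankelD m"
proof -
  have "seqA (2 * k + 1) = 0" for k
    using seqa_double[of "k + 1"] by (simp add: seqA_eq_seqa)
  moreover have "(\<lambda>k. seqA (2 * k)) = seqa"
    using seqa_double_plus_one by (simp add: seqA_eq_seqa)
  moreover have "seqA (2 * k + 2) = seqA k" for k
  proof -
    have "seqA (2 * k + 2) = seqa (2 * (k + 1) + 1)" by (simp add: seqA_eq_seqa)
    then show ?thesis by (simp only: seqa_double_plus_one seqA_eq_seqa)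
  qed
  moreover have "(2 * m + b + 1) div 2 = m + b" "(2 * m + b) div 2 = m"
    using b by auto
  ultimately show ?thesis
    using det_hankel_mat_odd_zero[of seqA "2 * m + b"]
    by (simp add: hankelD_eq_det_hankel_mat hankelE_def)
qed

lemma hankelE_double: "hankelE (2 * q) = (-1) ^ q * hankelE q ^ 2"
proof (cases q)
  case 0
  then show ?thesis by (simp add: hankelE_def hankel_mat_def)
next
  case (Suc p)
  have "(\<lambda>m. (seqa(0 := 0)) (2 * m + 1)) = seqa"
    using seqa_double_plus_one by auto
  then have "det (hankel_mat (2 * q) (seqa(0 := 0))) = (-1) ^ q * hankelE q ^ 2"
    using det_hankel_mat_even_zero_even_size[of "seqa(0 := 0)" q]
    by (simp add: hankelE_def seqa_double)
  moreover have "det (hankel_mat (2 * p + 1) (\<lambda>k. seqa (k + 2))) = 0"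
    by (rule det_hankel_mat_even_zero_odd_size) (use seqa_double[of "Suc _"] in simp)
  ultimately show ?thesis
    using det_hankel_mat_split_corner[of "2 * q" seqa] Suc by (simp add: hankelE_def)
qed

lemma hankelE_double_plus_one: "hankelE (2 * q + 1) = (-1) ^ q * hankelD q ^ 2"
proof -
  have "seqa (2 * m + 2) = 0" for m
    using seqa_double[of "Suc m"] by simp
  moreover have "(\<lambda>m. seqa (2 * m + 1 + 2)) = seqA"
    using seqa_double_plus_one[of "Suc _"] by (auto simp: seqA_eq_seqa)
  ultimately have "det (hankel_mat (2 * q) (\<lambda>k. seqa (k + 2))) = (-1) ^ q * hankelD q ^ 2"
    using det_hankel_mat_even_zero_even_size[of "\<lambda>k. seqa (k + 2)" q]
    by (simp add: hankelD_eq_det_hankel_mat)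
  moreover have "det (hankel_mat (2 * q + 1) (seqa(0 := 0))) = 0"
    by (rule det_hankel_mat_even_zero_odd_size) (simp add: seqa_double)
  ultimately show ?thesis
    using det_hankel_mat_split_corner[of "2 * q + 1" seqa] by (simp add: hankelE_def)
qed

lemma digit_double_add_Suc: "b < 2 \<Longrightarrow> digit (2 * m + b) (Suc i) = digit m i"
  by (simp add: digit_def div_mult2_eq)

lemma digit_double_add_0: "b < 2 \<Longrightarrow> digit (2 * m + b) 0 = b"
  by (simp add: digit_def)

lemma digit_eq_0_if_le: "m \<le> i \<Longrightarrow> digit m i = 0"
proof -
  assume "m \<le> i"
  then have "m < 2 ^ i"
    using less_exp[of m] power_increasing[of m i "2 :: nat"] by linarith
  then show ?thesis by (simp add: digit_def)
qed

definition descents :: "nat \<Rightarrow> nat set" where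
  "descents m = {j. digit m (Suc j) = 1 \<and> digit m j = 0}"

lemma finite_descents: "finite (descents m)"
proof (rule finite_subset)
  show "descents m \<subseteq> {..<m}"
  proof
    fix j assume "j \<in> descents m"
    then have "digit m (Suc j) \<noteq> 0" by (simp add: descents_def)
    then have "\<not> m \<le> Suc j" using digit_eq_0_if_le[of m "Suc j"] by auto
    then show "j \<in> {..<m}" by simp
  qed
qed simp

lemma delta_eq_card_descents:
  "delta n = card (descents n - {0}) + (if digit n 1 = 1 \<and> digit n 0 = 1 then 1 else 0)"
proof -
  have "{i. 1 \<le> i \<and> digit n (i + 1) = 1 \<and> digit n i = 0} = descents n - {0}"
    by (auto simp: descents_def)
  then show ?thesis by (simp add: delta_def)
qed

lemma descents_double_add:
  assumes b: "b < 2"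
  shows "descents (2 * m + b) - {0} = Suc ` descents m"
proof
  show "descents (2 * m + b) - {0} \<subseteq> Suc ` descents m"
  proof
    fix i assume i: "i \<in> descents (2 * m + b) - {0}"
    then obtain j where "i = Suc j" by (cases i) auto
    with i b show "i \<in> Suc ` descents m" by (simp add: descents_def digit_double_add_Suc)
  qed
qed (use b in \<open>auto simp: descents_def digit_double_add_Suc\<close>)

lemma card_descents:
  "card (descents m) = card (descents m - {0}) + (if digit m 1 = 1 \<and> digit m 0 = 0 then 1 else 0)"
proof (cases "0 \<in> descents m")
  case True
  then have "card (descents m) = card (descents m - {0}) + 1"
    using card_Suc_Diff1[OF finite_descents True] by simp
  with True show ?thesis by (simp add: descents_def)
next
  case False
  then show ?thesis by (simp add: descents_def)
qed

lemma digit_less_2: "digit m i < 2"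
  by (simp add: digit_def)

lemma delta_double_add:
  assumes b: "b < 2"
  shows "delta (2 * m + b) = card (descents m) + (if digit m 0 = 1 \<and> b = 1 then 1 else 0)"
proof -
  have "digit (2 * m + b) 1 = digit m 0" "digit (2 * m + b) 0 = b"
    using digit_double_add_Suc[OF b, of m 0] digit_double_add_0[OF b] by simp_all
  then show ?thesis
    by (simp add: delta_eq_card_descents descents_double_add[OF b] card_image)
qed

lemma delta_double_add_parity:
  assumes b: "b < 2"
  shows "even (delta (2 * m + b) + delta m + (m + b) div 2)"
proof -
  have "card (descents m) + delta m = 2 * card (descents m - {0}) + digit m 1"
    using digit_less_2[of m 0] digit_less_2[of m 1]
    unfolding card_descents[of m] delta_eq_card_descents[of m] by auto
  moreover have "digit m 1 = m div 2 mod 2" "digit m 0 = m mod 2"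
    by (simp_all add: digit_def)
  ultimately show ?thesis
    unfolding delta_double_add[OF b] using b by presburger
qed

lemma hankelD_hankelE_signs: "hankelD n = (-1) ^ delta n \<and> hankelE n = (-1) ^ (n div 2)"
proof (induction n rule: less_induct)
  case (less n)
  have sign_squared: "((-1 :: int) ^ k) ^ 2 = 1" for k
    by (simp add: power_mult[symmetric] power_mult_distrib)
  have E: "hankelE n = (-1) ^ (n div 2)"
  proof (cases "n = 0")
    case True
    then show ?thesis by (simp add: hankelE_def hankel_mat_def)
  next
    case False
    show ?thesis
    proof (cases "even n")
      case True
      then obtain q where n: "n = 2 * q" ..
      with \<open>n \<noteq> 0\<close> have "q < n" by simp
      with less n show ?thesis by (simp add: hankelE_double sign_squared)
    next
      case odd: False
      then obtain q where n: "n = 2 * q + 1" by (rule oddE)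
      then have "q < n" by simp
      with less have "hankelD q = (-1) ^ delta q" by blast
      then show ?thesis unfolding n hankelE_double_plus_one by (simp add: sign_squared)
    qed
  qed
  have D: "hankelD n = (-1) ^ delta n"
  proof (cases "n = 0")
    case True
    then show ?thesis by (simp add: hankelD_def delta_def digit_def)
  next
    case False
    define m b where "m = n div 2" and "b = n mod 2"
    then have n: "n = 2 * m + b" and b: "b < 2" by simp_all
    have "hankelE (m + b) = (-1) ^ ((m + b) div 2)"
      using E less n b by (cases "m + b = n") auto
    moreover have "hankelD m = (-1) ^ delta m"
      using less n False by simp
    ultimately have "hankelD n = (-1) ^ ((m + b) div 2 + delta m)"
      by (simp add: n hankelD_double_add[OF b] power_add)
    also have "\<dots> = (-1) ^ delta n"
      using delta_double_add_parity[OF b, of m] unfolding n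
      by (simp add: minus_one_power_iff) presburger
    finally show ?thesis .
  qed
  from D E show ?case ..
qed

theorem corollary2p4:
  fixes n :: nat
  shows "hankelD n = (-1) ^ delta n"
  using hankelD_hankelE_signs by blast

end
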